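(* Let $m\ge 2$ and let $K\ne\Delta_{[m]}$ be a simplicial complex on $[m]$. Then for every prime $p$, $$s(\mathrm{Bier}(K))=s_p(\mathrm{Bier}(K))=f_0(K)-f_{m-2}(K)+1.$$
   Context: A simplicial complex $K$ on $[m]=\{1,\dots,m\}$ is a nonempty family of subsets of $[m]$ closed under taking subsets; $V(K)=\{i:\{i\}\in K\}$, and $f_i(K)$ is the number of faces of $K$ of cardinality $i+1$ (so $f_0(K)=|V(K)|$). $\Delta_{[m]}=2^{[m]}$. Let $[m']=\{1',\dots,m'\}$ be a disjoint copy of $[m]$, $I'=\{i':i\in I\}$. For $K\ne\Delta_{[m]}$ the Alexander dual $K^\vee$ is the complex on $[m']$ with $J'\in K^\vee$ iff $[m]\setminus J\notin K$. The Bier sphere $\mathrm{Bier}(K)$ is the complex on $[m]\sqcup[m']$ with faces $I\sqcup J'$, $I\in K$, $J'\in K^\vee$, $I\cap J=\varnothing$. For a simplicial complex $L$ with $n=|V(L)|$ vertices, the complex Buchstaber number $s(L)$ is the largest integer $r$ such that there is a map $\Lambda\colon V(L)\to\mathbb Z^{n-r}$ sending the vertex set of every face of $L$ injectively onto a subset of some basis of the lattice $\mathbb Z^{n-r}$. For a prime $p$, the mod $p$ Buchstaber number $s_p(L)$ is the largest $r$ such that there is a map $\Lambda_p\colon V(L)\to\mathbb Z_p^{n-r}$ sending the vertex set of every face injectively onto a linearly independent set over the field $\mathbb Z_p$. *)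

theory Defs
  imports "HOL-Computational_Algebra.Primes"
begin

text \<open>Simplicial complex on [m] = {1..m} (ghost vertices allowed).\<close>
definition simplicial_complex_on :: "nat \<Rightarrow> nat set set \<Rightarrow> bool" where
  "simplicial_complex_on m K \<longleftrightarrow> K \<noteq> {} \<and> (\<forall>F\<in>K. F \<subseteq> {1..m}) \<and>
     (\<forall>F\<in>K. \<forall>G. G \<subseteq> F \<longrightarrow> G \<in> K)"

definition vertices :: "'v set set \<Rightarrow> 'v set" where
  "vertices L = {v. {v} \<in> L}"

definition fvec :: "nat set set \<Rightarrow> nat \<Rightarrow> nat" where
  "fvec K i = card {F\<in>K. card F = i + 1}"

text \<open>Alexander dual, with J' represented by its index set J \<subseteq> [m].\<close>
definition alexander_dual :: "nat \<Rightarrow> nat set set \<Rightarrow> nat set set" where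
  "alexander_dual m K = {J. J \<subseteq> {1..m} \<and> {1..m} - J \<notin> K}"

text \<open>Bier sphere on [m] \<squnion> [m']; vertex i is Inl i, vertex i' is Inr i.\<close>
definition bier :: "nat \<Rightarrow> nat set set \<Rightarrow> (nat + nat) set set" where
  "bier m K = {Inl ` I \<union> Inr ` J | I J. I \<in> K \<and> J \<in> alexander_dual m K \<and> I \<inter> J = {}}"

definition Zvec :: "nat \<Rightarrow> (nat \<Rightarrow> int) set" where
  "Zvec k = {v. \<forall>i\<ge>k. v i = 0}"

definition Zbasis :: "nat \<Rightarrow> (nat \<Rightarrow> int) set \<Rightarrow> bool" where
  "Zbasis k B \<longleftrightarrow> finite B \<and> B \<subseteq> Zvec k \<and>
     (\<forall>v\<in>Zvec k. \<exists>c. v = (\<lambda>i. \<Sum>b\<in>B. c b * b i)) \<and>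
     (\<forall>c. (\<lambda>i. \<Sum>b\<in>B. c b * b i) = (\<lambda>i. 0) \<longrightarrow> (\<forall>b\<in>B. c b = 0))"

definition Zpvec :: "nat \<Rightarrow> nat \<Rightarrow> (nat \<Rightarrow> int) set" where
  "Zpvec p k = {v. (\<forall>i. 0 \<le> v i \<and> v i < int p) \<and> (\<forall>i\<ge>k. v i = 0)}"

definition lin_indep_mod :: "nat \<Rightarrow> (nat \<Rightarrow> int) set \<Rightarrow> bool" where
  "lin_indep_mod p S \<longleftrightarrow> finite S \<and>
     (\<forall>c. (\<forall>i. (\<Sum>b\<in>S. c b * b i) mod int p = 0) \<longrightarrow> (\<forall>b\<in>S. c b mod int p = 0))"

definition buchstaber :: "'v set set \<Rightarrow> nat" where
  "buchstaber L = (GREATEST r. r \<le> card (vertices L) \<and>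
     (\<exists>\<Lambda> :: 'v \<Rightarrow> (nat \<Rightarrow> int). \<forall>\<sigma>\<in>L. inj_on \<Lambda> \<sigma> \<and>
        (\<exists>B. Zbasis (card (vertices L) - r) B \<and> \<Lambda> ` \<sigma> \<subseteq> B)))"

definition buchstaber_mod :: "nat \<Rightarrow> 'v set set \<Rightarrow> nat" where
  "buchstaber_mod p L = (GREATEST r. r \<le> card (vertices L) \<and>
     (\<exists>\<Lambda> :: 'v \<Rightarrow> (nat \<Rightarrow> int). \<forall>\<sigma>\<in>L. inj_on \<Lambda> \<sigma> \<and>
        \<Lambda> ` \<sigma> \<subseteq> Zpvec p (card (vertices L) - r) \<and> lin_indep_mod p (\<Lambda> ` \<sigma>)))"

end

theory Submission
  imports Defs "HOL-Library.FuncSet"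
begin

(*
  Bier(K) has n = f_0(K) + (m - f_{m-2}(K)) vertices, since i' is a vertex exactly when
  [m] - {i} is not a face of K. A face I + J' never uses an index from both sides and never
  exhausts [m] (otherwise J = [m] - I would not lie in the Alexander dual), while a face of K of
  maximal size extends to a face of Bier(K) with m - 1 vertices.

  Send both i and i' to u_i, where u_1, ..., u_{m-1} is the standard basis of Z^{m-1} and
  u_m = -(u_1 + ... + u_{m-1}). Any m - 1 of the u_i form a lattice basis, and every face
  misses some index, so this is an integral characteristic map of rank m - 1: s >= n - (m - 1).
  Reducing an integral characteristic map mod p gives a mod p one (a lattice basis stays
  independent mod p), so s <= s_p; and a mod p characteristic map of rank k forces every face,
  in particular one with m - 1 vertices, to have at most k vertices, whence s_p <= n - (m - 1).
*)

section \<open>Lattice bases and linear independence mod p\<close>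

lemma Zbasis_coeffs_mod:
  assumes B: "Zbasis k B" and comb: "\<forall>i. (\<Sum>b\<in>B. c b * b i) mod int p = 0" and b: "b \<in> B"
  shows "c b mod int p = 0"
proof -
  define w where "w = (\<lambda>i. (\<Sum>b\<in>B. c b * b i) div int p)"
  have "(\<Sum>b\<in>B. c b * b i) = 0" if "i \<ge> k" for i
    using B that by (intro sum.neutral) (auto simp: Zbasis_def Zvec_def)
  then have "w \<in> Zvec k"
    by (simp add: w_def Zvec_def)
  then obtain d where d: "w = (\<lambda>i. \<Sum>b\<in>B. d b * b i)"
    using B by (auto simp: Zbasis_def)
  have "(\<lambda>i. \<Sum>b\<in>B. (c b - int p * d b) * b i) = (\<lambda>i. 0)"
  proof
    fix i
    have "(\<Sum>b\<in>B. c b * b i) = int p * w i"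
      using comb unfolding w_def by (metis dvd_mult_div_cancel mod_0_imp_dvd)
    then show "(\<Sum>b\<in>B. (c b - int p * d b) * b i) = 0"
      by (simp add: d algebra_simps sum_subtractf sum_distrib_left)
  qed
  then have "c b - int p * d b = 0"
    using B b by (auto simp: Zbasis_def)
  then show ?thesis by simp
qed

lemma inj_on_mod_Zbasis:
  assumes B: "Zbasis k B" and p: "p > 1"
  shows "inj_on (\<lambda>x i. x i mod int p) B"
proof (rule inj_onI, rule ccontr)
  fix x y assume x: "x \<in> B" and y: "y \<in> B" and ne: "x \<noteq> y"
    and eq: "(\<lambda>i. x i mod int p) = (\<lambda>i. y i mod int p)"
  define c :: "(nat \<Rightarrow> int) \<Rightarrow> int" where "c b = of_bool (b = x) - of_bool (b = y)" for b
  have "finite B" using B by (simp add: Zbasis_def)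
  have "(\<Sum>b\<in>B. c b * b i) = x i - y i" for i
  proof -
    have "(\<Sum>b\<in>B. c b * b i) = (\<Sum>b\<in>B. (if b = x then x i else 0) - (if b = y then y i else 0))"
      by (rule sum.cong) (auto simp: c_def)
    also have "\<dots> = x i - y i"
      using \<open>finite B\<close> x y by (simp add: sum_subtractf)
    finally show ?thesis .
  qed
  moreover have "(x i - y i) mod int p = 0" for i
    using fun_cong[OF eq, of i] by (simp add: mod_eq_dvd_iff)
  ultimately have "c x mod int p = 0"
    using Zbasis_coeffs_mod[OF B _ x, of c p] by simp
  then show False using p ne by (simp add: c_def)
qed

lemma mod_in_Zpvec: "x \<in> Zvec k \<Longrightarrow> p > 0 \<Longrightarrow> (\<lambda>i. x i mod int p) \<in> Zpvec p k"
  by (simp add: Zvec_def Zpvec_def)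

lemma lin_indep_mod_image_mod:
  assumes B: "Zbasis k B" and S: "S \<subseteq> B" and p: "p > 1"
  shows "lin_indep_mod p ((\<lambda>x i. x i mod int p) ` S)"
  unfolding lin_indep_mod_def
proof (intro conjI allI impI)
  let ?red = "\<lambda>x i. x i mod int p"
  have finB: "finite B" using B by (simp add: Zbasis_def)
  then show "finite (?red ` S)" using S finite_subset by blast
  have inj: "inj_on ?red S" using inj_on_subset[OF inj_on_mod_Zbasis[OF B p] S] .
  fix c assume c: "\<forall>i. (\<Sum>b\<in>?red ` S. c b * b i) mod int p = 0"
  define c' where "c' x = (if x \<in> S then c (?red x) else 0)" for x
  have "(\<Sum>x\<in>B. c' x * x i) mod int p = 0" for i
  proof -
    have "(\<Sum>x\<in>B. c' x * x i) = (\<Sum>x\<in>S. c (?red x) * x i)"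
      using finB S by (intro sum.mono_neutral_cong_right) (auto simp: c'_def)
    also have "\<dots> mod int p = (\<Sum>x\<in>S. c (?red x) * ?red x i) mod int p"
      by (subst (1 2) mod_sum_eq[symmetric]) (simp add: mod_mult_right_eq)
    also have "(\<Sum>x\<in>S. c (?red x) * ?red x i) = (\<Sum>b\<in>?red ` S. c b * b i)"
      by (simp add: sum.reindex[OF inj])
    finally show ?thesis using c by simp
  qed
  then have "c' x mod int p = 0" if "x \<in> S" for x
    using Zbasis_coeffs_mod[OF B, of c' p x] that S by blast
  then show "\<forall>b\<in>?red ` S. c b mod int p = 0"
    by (auto simp: c'_def)
qed

lemma inj_on_lin_comb_mod:
  assumes S: "S \<subseteq> Zpvec p k" and li: "lin_indep_mod p S"
  shows "inj_on (\<lambda>c. restrict (\<lambda>i. (\<Sum>b\<in>S. c b * b i) mod int p) {..<k}) (S \<rightarrow>\<^sub>E {0..<int p})"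
proof (rule inj_onI)
  fix f g assume f: "f \<in> S \<rightarrow>\<^sub>E {0..<int p}" and g: "g \<in> S \<rightarrow>\<^sub>E {0..<int p}"
    and eq: "restrict (\<lambda>i. (\<Sum>b\<in>S. f b * b i) mod int p) {..<k} =
             restrict (\<lambda>i. (\<Sum>b\<in>S. g b * b i) mod int p) {..<k}"
  have "(\<Sum>b\<in>S. (f b - g b) * b i) mod int p = 0" for i
  proof (cases "i < k")
    case True
    then have "(\<Sum>b\<in>S. f b * b i) mod int p = (\<Sum>b\<in>S. g b * b i) mod int p"
      using fun_cong[OF eq, of i] by simp
    then show ?thesis
      by (simp add: left_diff_distrib sum_subtractf mod_eq_dvd_iff)
  next
    case False
    then show ?thesis
      using S by (subst sum.neutral) (auto simp: Zpvec_def)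
  qed
  then have "(f b - g b) mod int p = 0" if "b \<in> S" for b
    using li that unfolding lin_indep_mod_def by (blast dest: spec[of _ "\<lambda>b. f b - g b"])
  then have "f b mod int p = g b mod int p" if "b \<in> S" for b
    using that by (simp add: mod_eq_dvd_iff dvd_eq_mod_eq_0)
  moreover have "f b \<in> {0..<int p}" "g b \<in> {0..<int p}" if "b \<in> S" for b
    using f g that by auto
  ultimately have "f b = g b" if "b \<in> S" for b
    using that by (simp add: mod_pos_pos_trivial)
  then show "f = g" using f g by (intro PiE_ext) auto
qed

lemma card_le_if_lin_indep_mod:
  assumes p: "p > 1" and S: "S \<subseteq> Zpvec p k" and li: "lin_indep_mod p S"
  shows "card S \<le> k"
proof -
  have "finite S" using li by (simp add: lin_indep_mod_def)
  then have "p ^ card S = card (S \<rightarrow>\<^sub>E {0..<int p})"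
    by (simp add: card_PiE)
  also have "\<dots> \<le> card ({..<k} \<rightarrow>\<^sub>E {0..<int p})"
  proof (rule card_inj_on_le[OF inj_on_lin_comb_mod[OF S li]])
    show "finite ({..<k} \<rightarrow>\<^sub>E {0..<int p})"
      by (simp add: finite_PiE)
    show "(\<lambda>c. restrict (\<lambda>i. (\<Sum>b\<in>S. c b * b i) mod int p) {..<k}) ` (S \<rightarrow>\<^sub>E {0..<int p})
        \<subseteq> {..<k} \<rightarrow>\<^sub>E {0..<int p}"
      using p by (intro image_subsetI, subst restrict_PiE_iff) simp
  qed
  also have "\<dots> = p ^ k"
    by (simp add: card_PiE)
  finally show ?thesis
    using p power_le_imp_le_exp by blast
qed

(* The vector u_{i+1} above, with indices shifted to start at 0. *)
definition simplex_vec :: "nat \<Rightarrow> nat \<Rightarrow> nat \<Rightarrow> int" where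
  "simplex_vec k i t = (if i < k then of_bool (t = i) else - of_bool (t < k))"

lemma simplex_vec_in_Zvec: "simplex_vec k i \<in> Zvec k"
  by (simp add: simplex_vec_def Zvec_def)

lemma inj_on_simplex_vec: "inj_on (simplex_vec k) {0..k}"
proof (rule inj_onI)
  fix i j assume ij: "i \<in> {0..k}" "j \<in> {0..k}" and eq: "simplex_vec k i = simplex_vec k j"
  show "i = j"
    using ij fun_cong[OF eq, of i] fun_cong[OF eq, of j]
    by (auto simp: simplex_vec_def split: if_splits)
qed

lemma sum_simplex_vec:
  "(\<Sum>i\<in>{0..k}. d i * simplex_vec k i t) = (if t < k then d t - d k else 0)"
proof -
  have "(\<Sum>i\<in>{0..k}. d i * simplex_vec k i t) = d k * simplex_vec k k t + (\<Sum>i<k. d i * simplex_vec k i t)"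
    by (simp add: atLeast0AtMost lessThan_Suc_atMost[symmetric])
  also have "(\<Sum>i<k. d i * simplex_vec k i t) = (\<Sum>i<k. if t = i then d i else 0)"
    by (rule sum.cong) (auto simp: simplex_vec_def)
  finally show ?thesis
    by (simp add: simplex_vec_def)
qed

lemma Zbasis_simplex_vec:
  assumes j: "j \<le> k"
  shows "Zbasis k (simplex_vec k ` ({0..k} - {j}))"
proof -
  let ?A = "{0..k} - {j}"
  have inj: "inj_on (simplex_vec k) ?A"
    using inj_on_simplex_vec by (rule inj_on_subset) auto
  have sum_A: "(\<Sum>i\<in>?A. d i * simplex_vec k i t) = (\<Sum>i\<in>{0..k}. d i * simplex_vec k i t)"
    if "d j = 0" for d t
    using j that by (simp add: sum.remove[of "{0..k}" j])
  have span: "\<exists>c. v = (\<lambda>t. \<Sum>b\<in>simplex_vec k ` ?A. c b * b t)" if v: "v \<in> Zvec k" for v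
  proof
    define c where "c b = v (inv_into {0..k} (simplex_vec k) b) - v j" for b
    have "(\<Sum>b\<in>simplex_vec k ` ?A. c b * b t) = (\<Sum>i\<in>?A. (v i - v j) * simplex_vec k i t)" for t
      using inj_on_simplex_vec by (simp add: sum.reindex[OF inj] c_def)
    also have "\<dots> t = v t" for t
      using v by (simp add: sum_A sum_simplex_vec Zvec_def)
    finally show "v = (\<lambda>t. \<Sum>b\<in>simplex_vec k ` ?A. c b * b t)" by simp
  qed
  have indep: "\<forall>b\<in>simplex_vec k ` ?A. c b = 0"
    if zero: "(\<lambda>t. \<Sum>b\<in>simplex_vec k ` ?A. c b * b t) = (\<lambda>t. 0)" for c
  proof -
    define d where "d i = (if i = j then 0 else c (simplex_vec k i))" for i
    have "(\<Sum>i\<in>?A. d i * simplex_vec k i t) = (\<Sum>b\<in>simplex_vec k ` ?A. c b * b t)" for t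
      by (simp add: sum.reindex[OF inj] d_def)
    then have "(\<Sum>i\<in>{0..k}. d i * simplex_vec k i t) = 0" for t
      using fun_cong[OF zero, of t] by (simp add: sum_A[symmetric] d_def)
    then have "d t = d k" if "t < k" for t
      using that sum_simplex_vec[of d k t] by simp
    then have d0: "d i = 0" if "i \<le> k" for i
      using that j by (metis d_def le_neq_implies_less)
    have "c (simplex_vec k i) = 0" if "i \<in> ?A" for i
      using that d0[of i] by (simp add: d_def)
    then show ?thesis by blast
  qed
  show ?thesis
    using span indep simplex_vec_in_Zvec by (auto simp: Zbasis_def)
qed

lemma simplex_vec_proper_subset_in_Zbasis:
  assumes "A \<subseteq> {0..k}" "A \<noteq> {0..k}"
  shows "\<exists>B. Zbasis k B \<and> simplex_vec k ` A \<subseteq> B"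
proof -
  obtain j where "j \<le> k" "j \<notin> A" using assms by fastforce
  then show ?thesis
    using assms Zbasis_simplex_vec by blast
qed

section \<open>Characteristic maps and Buchstaber numbers\<close>

definition integral_char_map :: "'v set set \<Rightarrow> nat \<Rightarrow> ('v \<Rightarrow> nat \<Rightarrow> int) \<Rightarrow> bool" where
  "integral_char_map L k \<Lambda> \<longleftrightarrow> (\<forall>\<sigma>\<in>L. inj_on \<Lambda> \<sigma> \<and> (\<exists>B. Zbasis k B \<and> \<Lambda> ` \<sigma> \<subseteq> B))"

definition mod_char_map :: "nat \<Rightarrow> 'v set set \<Rightarrow> nat \<Rightarrow> ('v \<Rightarrow> nat \<Rightarrow> int) \<Rightarrow> bool" where
  "mod_char_map p L k \<Lambda> \<longleftrightarrow>
     (\<forall>\<sigma>\<in>L. inj_on \<Lambda> \<sigma> \<and> \<Lambda> ` \<sigma> \<subseteq> Zpvec p k \<and> lin_indep_mod p (\<Lambda> ` \<sigma>))"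

lemma buchstaber_eq_Greatest:
  "buchstaber L = (GREATEST r. r \<le> card (vertices L) \<and>
     (\<exists>\<Lambda>. integral_char_map L (card (vertices L) - r) \<Lambda>))"
  by (simp add: buchstaber_def integral_char_map_def)

lemma buchstaber_mod_eq_Greatest:
  "buchstaber_mod p L = (GREATEST r. r \<le> card (vertices L) \<and>
     (\<exists>\<Lambda>. mod_char_map p L (card (vertices L) - r) \<Lambda>))"
  by (simp add: buchstaber_mod_def mod_char_map_def)

lemma mod_char_map_reduce:
  assumes "integral_char_map L k \<Lambda>" "p > 1"
  shows "mod_char_map p L k (\<lambda>v i. \<Lambda> v i mod int p)"
  unfolding mod_char_map_def
proof
  fix \<sigma> assume "\<sigma> \<in> L"
  then obtain B where B: "Zbasis k B" "\<Lambda> ` \<sigma> \<subseteq> B" and inj: "inj_on \<Lambda> \<sigma>"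
    using assms by (auto simp: integral_char_map_def)
  let ?red = "\<lambda>x i. x i mod int p"
  have "(\<lambda>v i. \<Lambda> v i mod int p) = ?red \<circ> \<Lambda>" by auto
  moreover have "inj_on (?red \<circ> \<Lambda>) \<sigma>"
    using inj inj_on_subset[OF inj_on_mod_Zbasis[OF B(1) assms(2)] B(2)] by (rule comp_inj_on)
  moreover have "?red ` \<Lambda> ` \<sigma> \<subseteq> Zpvec p k"
    using B assms(2) by (auto simp: Zbasis_def intro!: mod_in_Zpvec)
  moreover have "lin_indep_mod p (?red ` \<Lambda> ` \<sigma>)"
    using B assms(2) by (rule lin_indep_mod_image_mod)
  ultimately show "inj_on (\<lambda>v i. \<Lambda> v i mod int p) \<sigma> \<and> (\<lambda>v i. \<Lambda> v i mod int p) ` \<sigma> \<subseteq> Zpvec p k \<and>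
      lin_indep_mod p ((\<lambda>v i. \<Lambda> v i mod int p) ` \<sigma>)"
    by (simp add: image_comp)
qed

lemma card_face_le_if_mod_char_map:
  assumes "mod_char_map p L k \<Lambda>" "p > 1" "\<sigma> \<in> L"
  shows "card \<sigma> \<le> k"
proof -
  have "card \<sigma> = card (\<Lambda> ` \<sigma>)"
    using assms by (simp add: mod_char_map_def card_image)
  also have "\<dots> \<le> k"
    using assms by (intro card_le_if_lin_indep_mod) (auto simp: mod_char_map_def)
  finally show ?thesis .
qed

lemma integral_char_map_simplex_vec:
  assumes "\<And>\<sigma>. \<sigma> \<in> L \<Longrightarrow> inj_on f \<sigma> \<and> f ` \<sigma> \<subseteq> {0..k} \<and> f ` \<sigma> \<noteq> {0..k}"
  shows "integral_char_map L k (simplex_vec k \<circ> f)"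
  unfolding integral_char_map_def
proof
  fix \<sigma> assume "\<sigma> \<in> L"
  then have f: "inj_on f \<sigma>" "f ` \<sigma> \<subseteq> {0..k}" "f ` \<sigma> \<noteq> {0..k}"
    using assms by auto
  have "inj_on (simplex_vec k \<circ> f) \<sigma>"
    using f(1) inj_on_subset[OF inj_on_simplex_vec f(2)] by (rule comp_inj_on)
  moreover have "\<exists>B. Zbasis k B \<and> (simplex_vec k \<circ> f) ` \<sigma> \<subseteq> B"
    using simplex_vec_proper_subset_in_Zbasis[OF f(2,3)] by (simp add: image_comp)
  ultimately show "inj_on (simplex_vec k \<circ> f) \<sigma> \<and> (\<exists>B. Zbasis k B \<and> (simplex_vec k \<circ> f) ` \<sigma> \<subseteq> B)" ..
qed

theorem buchstaber_eq_if_face_card_eq_char_rank: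
  fixes L :: "'v set set"
  assumes p: "p > 1" and \<Lambda>: "integral_char_map L d \<Lambda>"
    and \<sigma>: "\<sigma> \<in> L" "card \<sigma> = d" and d: "d \<le> card (vertices L)"
  shows "buchstaber L = card (vertices L) - d" and "buchstaber_mod p L = card (vertices L) - d"
proof -
  let ?n = "card (vertices L)"
  have le: "r \<le> ?n - d" if "r \<le> ?n" "mod_char_map p L (?n - r) \<Lambda>'" for r \<Lambda>'
    using card_face_le_if_mod_char_map[OF that(2) p \<sigma>(1)] \<sigma>(2) that(1) by linarith
  have attained: "integral_char_map L (?n - (?n - d)) \<Lambda>"
    using \<Lambda> d by (simp add: diff_diff_cancel)
  show "buchstaber L = ?n - d"
    unfolding buchstaber_eq_Greatest
    by (rule Greatest_equality) (use attained in \<open>auto intro: le mod_char_map_reduce[OF _ p]\<close>)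
  show "buchstaber_mod p L = ?n - d"
    unfolding buchstaber_mod_eq_Greatest
    by (rule Greatest_equality) (use attained mod_char_map_reduce[OF _ p] in \<open>auto intro: le\<close>)
qed

section \<open>Bier spheres\<close>

lemma fvec_0_eq_card_vertices: "fvec K 0 = card (vertices K)"
proof -
  have "{F\<in>K. card F = 0 + 1} = (\<lambda>i. {i}) ` vertices K"
    by (auto simp: vertices_def card_1_singleton_iff)
  then show ?thesis
    by (simp add: fvec_def card_image)
qed

lemma card_eq_minus_one_iff_delete:
  fixes m :: nat
  assumes "F \<subseteq> {1..m}" "m \<ge> 1"
  shows "card F = m - 1 \<longleftrightarrow> (\<exists>i\<in>{1..m}. F = {1..m} - {i})"
proof
  assume card: "card F = m - 1"
  then have "F \<noteq> {1..m}"
    using assms(2) by auto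
  then obtain i where i: "i \<in> {1..m}" "i \<notin> F"
    using assms(1) by blast
  then have "F \<subseteq> {1..m} - {i}" "card ({1..m} - {i}) = m - 1"
    using assms by auto
  then have "F = {1..m} - {i}"
    using card by (intro card_subset_eq) auto
  then show "\<exists>i\<in>{1..m}. F = {1..m} - {i}" using i by blast
qed auto

lemma fvec_codim_one:
  fixes m :: nat
  assumes "\<And>F. F \<in> K \<Longrightarrow> F \<subseteq> {1..m}" "m \<ge> 2"
  shows "fvec K (m - 2) = card {i\<in>{1..m}. {1..m} - {i} \<in> K}"
proof -
  have "F \<in> K \<and> card F = m - 2 + 1 \<longleftrightarrow> (\<exists>i\<in>{1..m}. {1..m} - {i} \<in> K \<and> F = {1..m} - {i})" for F
    using assms(1)[of F] card_eq_minus_one_iff_delete[of F m] assms(2)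
    by (auto simp: Suc_diff_Suc numeral_2_eq_2)
  then have "{F\<in>K. card F = m - 2 + 1} = (\<lambda>i. {1..m} - {i}) ` {i\<in>{1..m}. {1..m} - {i} \<in> K}"
    by blast
  moreover have "inj_on (\<lambda>i. {1..m} - {i}) {i\<in>{1..m}. {1..m} - {i} \<in> K}"
    by (rule inj_onI) blast
  ultimately show ?thesis
    unfolding fvec_def by (simp add: card_image)
qed

lemma vertices_alexander_dual:
  "vertices (alexander_dual m K) = {i\<in>{1..m}. {1..m} - {i} \<notin> K}"
  by (auto simp: vertices_def alexander_dual_def)

lemma bier_iff:
  "\<sigma> \<in> bier m K \<longleftrightarrow>
     Inl -` \<sigma> \<in> K \<and> Inr -` \<sigma> \<in> alexander_dual m K \<and> Inl -` \<sigma> \<inter> Inr -` \<sigma> = {}"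
proof
  assume "\<sigma> \<in> bier m K"
  then obtain I J where "\<sigma> = Inl ` I \<union> Inr ` J" "I \<in> K" "J \<in> alexander_dual m K" "I \<inter> J = {}"
    by (auto simp: bier_def)
  moreover have "Inl -` \<sigma> = I" "Inr -` \<sigma> = J"
    using calculation(1) by auto
  ultimately show "Inl -` \<sigma> \<in> K \<and> Inr -` \<sigma> \<in> alexander_dual m K \<and> Inl -` \<sigma> \<inter> Inr -` \<sigma> = {}"
    by simp
next
  have "\<sigma> = Inl ` (Inl -` \<sigma>) \<union> Inr ` (Inr -` \<sigma>)"
  proof (intro equalityI subsetI)
    show "x \<in> Inl ` (Inl -` \<sigma>) \<union> Inr ` (Inr -` \<sigma>)" if "x \<in> \<sigma>" for x
      using that by (cases x) auto
  qed auto
  then show "Inl -` \<sigma> \<in> K \<and> Inr -` \<sigma> \<in> alexander_dual m K \<and> Inl -` \<sigma> \<inter> Inr -` \<sigma> = {} \<Longrightarrow> \<sigma> \<in> bier m K"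
    unfolding bier_def by blast
qed

locale proper_complex =
  fixes m :: nat and K :: "nat set set"
  assumes complex: "simplicial_complex_on m K" and proper: "K \<noteq> Pow {1..m}"
begin

lemma face_subset: "F \<in> K \<Longrightarrow> F \<subseteq> {1..m}"
  using complex by (auto simp: simplicial_complex_on_def)

lemma face_downward_closed: "F \<in> K \<Longrightarrow> G \<subseteq> F \<Longrightarrow> G \<in> K"
  using complex by (auto simp: simplicial_complex_on_def)

lemma empty_face: "{} \<in> K"
  using complex face_downward_closed by (auto simp: simplicial_complex_on_def)

lemma full_simplex_not_face: "{1..m} \<notin> K"
  using proper face_subset face_downward_closed by blast

lemma empty_in_alexander_dual: "{} \<in> alexander_dual m K"
  using full_simplex_not_face by (simp add: alexander_dual_def)

lemma alexander_dual_downward_closed: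
  "J \<in> alexander_dual m K \<Longrightarrow> J' \<subseteq> J \<Longrightarrow> J' \<in> alexander_dual m K"
  unfolding alexander_dual_def using face_downward_closed by blast

lemma finite_vertices: "finite (vertices K)"
proof -
  have "vertices K \<subseteq> {1..m}"
    using face_subset by (auto simp: vertices_def)
  then show ?thesis
    using finite_subset by blast
qed

lemma bier_face_misses_index:
  assumes "\<sigma> \<in> bier m K"
  obtains j where "j \<in> {1..m}" "Inl j \<notin> \<sigma>" "Inr j \<notin> \<sigma>"
proof -
  have faces: "Inl -` \<sigma> \<in> K" "Inr -` \<sigma> \<in> alexander_dual m K"
    and disj: "Inl -` \<sigma> \<inter> Inr -` \<sigma> = {}"
    using assms by (simp_all add: bier_iff)
  then have "Inl -` \<sigma> \<noteq> {1..m} - Inr -` \<sigma>"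
    by (auto simp: alexander_dual_def)
  then show ?thesis
    using that disj face_subset[OF faces(1)] by blast
qed

lemma vertices_bier:
  "vertices (bier m K) = Inl ` vertices K \<union> Inr ` vertices (alexander_dual m K)"
proof -
  have vimages: "Inl -` {Inl i} = {i}" "Inr -` {Inl i} = {}" "Inl -` {Inr i} = {}" "Inr -` {Inr i} = {i}"
    for i :: nat
    by auto
  have "{v} \<in> bier m K \<longleftrightarrow> v \<in> Inl ` vertices K \<union> Inr ` vertices (alexander_dual m K)" for v
    using empty_face empty_in_alexander_dual by (cases v) (auto simp: bier_iff vertices_def vimages)
  then show ?thesis
    by (auto simp: vertices_def)
qed

lemma bier_face_subset_vertices: "\<sigma> \<in> bier m K \<Longrightarrow> \<sigma> \<subseteq> vertices (bier m K)"
proof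
  fix v assume "\<sigma> \<in> bier m K" "v \<in> \<sigma>"
  then have faces: "Inl -` \<sigma> \<in> K" "Inr -` \<sigma> \<in> alexander_dual m K" and v: "v \<in> \<sigma>"
    by (simp_all add: bier_iff)
  show "v \<in> vertices (bier m K)"
  proof (cases v)
    case (Inl i)
    then show ?thesis
      unfolding vertices_bier using v face_downward_closed[OF faces(1), of "{i}"]
      by (auto simp: vertices_def)
  next
    case (Inr j)
    then show ?thesis
      unfolding vertices_bier using v alexander_dual_downward_closed[OF faces(2), of "{j}"]
      by (auto simp: vertices_def)
  qed
qed

lemma finite_vertices_alexander_dual: "finite (vertices (alexander_dual m K))"
  unfolding vertices_alexander_dual by simp

lemma finite_vertices_bier: "finite (vertices (bier m K))"
  by (simp add: vertices_bier finite_vertices finite_vertices_alexander_dual)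

lemma card_vertices_bier:
  "card (vertices (bier m K)) = card (vertices K) + card (vertices (alexander_dual m K))"
  unfolding vertices_bier
  using finite_vertices finite_vertices_alexander_dual
  by (subst card_Un_disjoint) (auto simp: card_image)

lemma card_vertices_alexander_dual:
  assumes "m \<ge> 2"
  shows "card (vertices (alexander_dual m K)) + fvec K (m - 2) = m"
proof -
  let ?W = "{i\<in>{1..m}. {1..m} - {i} \<in> K}"
  have "vertices (alexander_dual m K) = {1..m} - ?W"
    unfolding vertices_alexander_dual by blast
  moreover have "?W \<subseteq> {1..m}"
    by auto
  moreover have "fvec K (m - 2) = card ?W"
    using face_subset assms by (rule fvec_codim_one)
  ultimately show ?thesis
    using card_mono[of "{1..m}" ?W] by (simp add: card_Diff_subset finite_subset)
qed

lemma bier_face_of_card: "\<exists>\<sigma>\<in>bier m K. card \<sigma> = m - 1"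
proof -
  have "card F < m + 1" if "F \<in> K" for F
    using card_mono[OF _ face_subset[OF that]] by simp
  then obtain I where I: "I \<in> K" and max: "\<And>F. F \<in> K \<Longrightarrow> card F \<le> card I"
    using ex_has_greatest_nat[of "\<lambda>F. F \<in> K" "{}" card "m + 1"] empty_face by blast
  have finI: "finite I" using face_subset[OF I] finite_subset by blast
  have "I \<noteq> {1..m}"
    using I full_simplex_not_face by blast
  then obtain j where j: "j \<in> {1..m}" "j \<notin> I"
    using face_subset[OF I] by blast
  have "insert j I \<notin> K"
    using max[of "insert j I"] j finI by auto
  moreover have ins: "insert j I \<subseteq> {1..m}"
    using j face_subset[OF I] by auto
  ultimately have "{1..m} - insert j I \<in> alexander_dual m K"
    by (simp add: alexander_dual_def double_diff)
  then have "Inl ` I \<union> Inr ` ({1..m} - insert j I) \<in> bier m K"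
    using I unfolding bier_def by blast
  moreover have "card (Inl ` I \<union> Inr ` ({1..m} - insert j I)) = m - 1"
    using finI j ins card_mono[OF _ ins]
    by (subst card_Un_disjoint) (auto simp: card_image card_Diff_subset)
  ultimately show ?thesis by blast
qed

lemma integral_char_map_bier:
  "integral_char_map (bier m K) (m - 1) (simplex_vec (m - 1) \<circ> (\<lambda>v. case_sum id id v - 1))"
proof (rule integral_char_map_simplex_vec)
  fix \<sigma> assume \<sigma>: "\<sigma> \<in> bier m K"
  let ?idx = "case_sum id id :: nat + nat \<Rightarrow> nat"
  have faces: "Inl -` \<sigma> \<in> K" "Inr -` \<sigma> \<in> alexander_dual m K"
    and disj: "Inl -` \<sigma> \<inter> Inr -` \<sigma> = {}"
    using \<sigma> by (simp_all add: bier_iff)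
  have idx: "?idx v \<in> {1..m}" if "v \<in> \<sigma>" for v
    using that face_subset[OF faces(1)] faces(2)
    by (cases v) (auto simp: alexander_dual_def)
  have idx_eq: "v = w" if "v \<in> \<sigma>" "w \<in> \<sigma>" "?idx v - 1 = ?idx w - 1" for v w
  proof -
    have "?idx v = ?idx w"
      using idx[OF that(1)] idx[OF that(2)] that(3) by (subst (asm) eq_diff_iff) auto
    then show ?thesis
      using that(1,2) disj by (cases v; cases w) auto
  qed
  obtain j where j: "j \<in> {1..m}" "Inl j \<notin> \<sigma>" "Inr j \<notin> \<sigma>"
    using bier_face_misses_index[OF \<sigma>] .
  have "inj_on (\<lambda>v. ?idx v - 1) \<sigma>"
    by (rule inj_onI) (rule idx_eq)
  moreover have "(\<lambda>v. ?idx v - 1) ` \<sigma> \<subseteq> {0..m - 1}"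
    using idx by (auto simp: diff_le_mono)
  moreover have "j - 1 \<notin> (\<lambda>v. ?idx v - 1) ` \<sigma>"
  proof
    assume "j - 1 \<in> (\<lambda>v. ?idx v - 1) ` \<sigma>"
    then obtain v where "v \<in> \<sigma>" "?idx v = j"
      using idx j(1) by force
    then show False
      using j(2,3) by (cases v) auto
  qed
  ultimately show "inj_on (\<lambda>v. ?idx v - 1) \<sigma> \<and> (\<lambda>v. ?idx v - 1) ` \<sigma> \<subseteq> {0..m - 1} \<and>
      (\<lambda>v. ?idx v - 1) ` \<sigma> \<noteq> {0..m - 1}"
    using j(1) by auto
qed

end

theorem mainTheorem12:
  fixes m :: nat and K :: "nat set set" and p :: nat
  assumes "m \<ge> 2"
    and "simplicial_complex_on m K"
    and "K \<noteq> Pow {1..m}"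
    and "prime p"
  shows "int (buchstaber (bier m K)) = int (buchstaber_mod p (bier m K))
       \<and> int (buchstaber_mod p (bier m K)) = int (fvec K 0) - int (fvec K (m - 2)) + 1"
proof -
  interpret proper_complex m K
    using assms(2,3) by unfold_locales
  have p: "p > 1"
    using assms(4) prime_gt_1_nat by blast
  let ?n = "card (vertices (bier m K))"
  obtain \<sigma> where \<sigma>: "\<sigma> \<in> bier m K" "card \<sigma> = m - 1"
    using bier_face_of_card by blast
  have rank: "m - 1 \<le> ?n"
    using card_mono[OF finite_vertices_bier bier_face_subset_vertices[OF \<sigma>(1)]] \<sigma>(2) by simp
  have s: "buchstaber (bier m K) = ?n - (m - 1)" "buchstaber_mod p (bier m K) = ?n - (m - 1)"
    using buchstaber_eq_if_face_card_eq_char_rank[OF p integral_char_map_bier \<sigma> rank] by auto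
  have "?n + fvec K (m - 2) = fvec K 0 + m"
    using card_vertices_bier card_vertices_alexander_dual[OF assms(1)]
    by (simp add: fvec_0_eq_card_vertices)
  moreover have "int (?n - (m - 1)) = int ?n - int m + 1"
    using rank assms(1) by (simp add: of_nat_diff)
  ultimately show ?thesis
    unfolding s by linarith
qed
end
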